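(* Let $G$ be a simple stochastic game, let $A$ be a subset of the arcs of $G$, and let $\sigma$ be a positional MAX strategy. Then $v^{G}_{\sigma}(x) = v^{G[A,\sigma]}_{\sigma}(x)$ for every vertex $x$ of $G$.
   Context: A simple stochastic game (SSG) $G$ is a finite directed graph whose vertex set $V$ is partitioned into $V_{\max}$ (MAX vertices), $V_{\min}$ (MIN vertices), $V_R$ (random vertices) and a nonempty set $V_S$ (sinks); every vertex of $V_{\max}\cup V_{\min}\cup V_R$ has at least one outgoing arc, every sink has exactly one outgoing arc, which is a self-loop; each random vertex $x$ carries a probability distribution $p_x$ with rational values on its out-neighbourhood, positive on every out-neighbour; each sink $s$ has a rational value $\mathrm{Val}(s)\in[0,1]$. A positional MAX (resp. MIN) strategy assigns to each MAX (resp. MIN) vertex one of its out-neighbours. Given $\sigma,\tau$ and a start vertex $x_0$, the random play moves from a MAX vertex $x$ to $\sigma(x)$, from a MIN vertex $x$ to $\tau(x)$, from a random vertex $x$ to an out-neighbour drawn according to $p_x$ independently, and stays forever at a sink once reached. The play's value is $\mathrm{Val}(s)$ if it reaches sink $s$ and $0$ otherwise; $v^G_{\sigma,\tau}(x_0)$ is its expectation. A best response to $\sigma$ is a positional MIN strategy $\tau$ with $v_{\sigma,\tau}\le v_{\sigma,\tau'}$ pointwise for all MIN strategies $\tau'$; positional best responses exist, and $v^G_\sigma:=v^G_{\sigma,\tau}$ for any best response $\tau$. Transformed game: for a set $A$ of arcs of $G$ and $f:A\to\mathbb{Q}$, $G[A,f]$ is obtained from a copy of $G$ by replacing each arc $e=(x,y)\in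 A$ by an arc $(x,s_e)$ to a new sink $s_e$ of value $f(e)$ (for random $x$, $p_x(s_e)=p_x(y)$); $y$ is kept. $G[A,\sigma]$ is $G[A,f]$ with $f((x,y))=v^G_\sigma(y)$. Strategies of $G$ and of $G[A,\sigma]$ are identified (a MAX vertex $x$ with $\sigma(x)=y$, $(x,y)\in A$, moves to $s_{(x,y)}$ in $G[A,\sigma]$). *)

theory Defs
  imports Complex_Main
begin

datatype kind = Max | Min | Rand | Sink

record 'v ssg =
  verts :: "'v set"
  kind  :: "'v \<Rightarrow> kind"
  arcs  :: "('v \<times> 'v) set"
  prob  :: "'v \<Rightarrow> 'v \<Rightarrow> real"
  val   :: "'v \<Rightarrow> real"

definition sinks :: "('v, 'b) ssg_scheme \<Rightarrow> 'v set" where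
  "sinks G = {s \<in> verts G. kind G s = Sink}"

definition ssg :: "('v, 'b) ssg_scheme \<Rightarrow> bool" where
  "ssg G \<longleftrightarrow>
     finite (verts G) \<and> arcs G \<subseteq> verts G \<times> verts G \<and> sinks G \<noteq> {} \<and>
     (\<forall>x\<in>verts G. kind G x \<noteq> Sink \<longrightarrow> (\<exists>y. (x, y) \<in> arcs G)) \<and>
     (\<forall>x\<in>verts G. kind G x = Sink \<longrightarrow> {y. (x, y) \<in> arcs G} = {x}) \<and>
     (\<forall>x\<in>verts G. kind G x = Rand \<longrightarrow>
        (\<forall>y. (x, y) \<in> arcs G \<longrightarrow> prob G x y > 0 \<and> prob G x y \<in> \<rat>) \<and>
        (\<Sum>y\<in>{y. (x, y) \<in> arcs G}. prob G x y) = 1) \<and>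
     (\<forall>s\<in>sinks G. val G s \<in> \<rat> \<and> 0 \<le> val G s \<and> val G s \<le> 1)"

definition max_strategy :: "('v, 'b) ssg_scheme \<Rightarrow> ('v \<Rightarrow> 'v) \<Rightarrow> bool" where
  "max_strategy G \<sigma> \<longleftrightarrow> (\<forall>x\<in>verts G. kind G x = Max \<longrightarrow> (x, \<sigma> x) \<in> arcs G)"

definition min_strategy :: "('v, 'b) ssg_scheme \<Rightarrow> ('v \<Rightarrow> 'v) \<Rightarrow> bool" where
  "min_strategy G \<tau> \<longleftrightarrow> (\<forall>x\<in>verts G. kind G x = Min \<longrightarrow> (x, \<tau> x) \<in> arcs G)"

definition trans :: "('v, 'b) ssg_scheme \<Rightarrow> ('v \<Rightarrow> 'v) \<Rightarrow> ('v \<Rightarrow> 'v) \<Rightarrow> 'v \<Rightarrow> 'v \<Rightarrow> real" where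
  "trans G \<sigma> \<tau> x y =
     (case kind G x of
        Max \<Rightarrow> (if y = \<sigma> x then 1 else 0)
      | Min \<Rightarrow> (if y = \<tau> x then 1 else 0)
      | Rand \<Rightarrow> (if (x, y) \<in> arcs G then prob G x y else 0)
      | Sink \<Rightarrow> (if y = x then 1 else 0))"

fun nstep :: "('v, 'b) ssg_scheme \<Rightarrow> ('v \<Rightarrow> 'v) \<Rightarrow> ('v \<Rightarrow> 'v) \<Rightarrow> nat \<Rightarrow> 'v \<Rightarrow> 'v \<Rightarrow> real" where
  "nstep G \<sigma> \<tau> 0 x y = (if y = x then 1 else 0)"
| "nstep G \<sigma> \<tau> (Suc n) x y = (\<Sum>z\<in>verts G. trans G \<sigma> \<tau> x z * nstep G \<sigma> \<tau> n z y)"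

text \<open>Expected value of the play: sum over sinks of Val(s) times the probability of
  reaching s (= limit of the probability of being at s after n steps, sinks absorbing).\<close>
definition play_value :: "('v, 'b) ssg_scheme \<Rightarrow> ('v \<Rightarrow> 'v) \<Rightarrow> ('v \<Rightarrow> 'v) \<Rightarrow> 'v \<Rightarrow> real" where
  "play_value G \<sigma> \<tau> x = lim (\<lambda>n. \<Sum>s\<in>sinks G. val G s * nstep G \<sigma> \<tau> n x s)"

definition best_response :: "('v, 'b) ssg_scheme \<Rightarrow> ('v \<Rightarrow> 'v) \<Rightarrow> ('v \<Rightarrow> 'v) \<Rightarrow> bool" where
  "best_response G \<sigma> \<tau> \<longleftrightarrow> min_strategy G \<tau> \<and>
     (\<forall>\<tau>'. min_strategy G \<tau>' \<longrightarrow> (\<forall>x\<in>verts G. play_value G \<sigma> \<tau> x \<le> play_value G \<sigma> \<tau>' x))"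

definition value_max :: "('v, 'b) ssg_scheme \<Rightarrow> ('v \<Rightarrow> 'v) \<Rightarrow> 'v \<Rightarrow> real" where
  "value_max G \<sigma> x = play_value G \<sigma> (SOME \<tau>. best_response G \<sigma> \<tau>) x"

text \<open>The transformed game G[A,f]: vertices Inl x (copy of G) and new sinks Inr e, e \<in> A.\<close>
definition transform :: "'v ssg \<Rightarrow> ('v \<times> 'v) set \<Rightarrow> ('v \<times> 'v \<Rightarrow> real) \<Rightarrow> ('v + ('v \<times> 'v)) ssg" where
  "transform G A f =
    \<lparr> verts = Inl ` verts G \<union> Inr ` A,
      kind = (\<lambda>u. case u of Inl x \<Rightarrow> kind G x | Inr e \<Rightarrow> Sink),
      arcs = {(Inl x, Inl y) | x y. (x, y) \<in> arcs G - A}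
             \<union> {(Inl x, Inr (x, y)) | x y. (x, y) \<in> A}
             \<union> {(Inr e, Inr e) | e. e \<in> A},
      prob = (\<lambda>u w. case (u, w) of
                (Inl x, Inl y) \<Rightarrow> prob G x y
              | (Inl x, Inr (x', y)) \<Rightarrow> (if x' = x then prob G x y else 0)
              | _ \<Rightarrow> 0),
      val = (\<lambda>u. case u of Inl x \<Rightarrow> val G x | Inr e \<Rightarrow> f e) \<rparr>"

definition transform_strat :: "'v ssg \<Rightarrow> ('v \<times> 'v) set \<Rightarrow> ('v \<Rightarrow> 'v) \<Rightarrow> ('v + ('v \<times> 'v)) ssg" where
  "transform_strat G A \<sigma> = transform G A (\<lambda>(x, y). value_max G \<sigma> y)"

definition lift_strat :: "('v \<times> 'v) set \<Rightarrow> ('v \<Rightarrow> 'v) \<Rightarrow> ('v + ('v \<times> 'v)) \<Rightarrow> ('v + ('v \<times> 'v))" where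
  "lift_strat A \<sigma> u = (case u of
      Inl x \<Rightarrow> (if (x, \<sigma> x) \<in> A then Inr (x, \<sigma> x) else Inl (\<sigma> x))
    | Inr e \<Rightarrow> Inr e)"

end

theory Submission
  imports Defs
begin

text \<open>
  For a fixed MAX strategy \<sigma>, the value v_\<sigma> is the least nonnegative function that dominates
  the sink values and is a Bellman supersolution: it does not increase along \<sigma>, some arc of
  each MIN vertex does not increase it, and it dominates its average at random vertices.
  Extending v_\<sigma> to the new sinks s_(x,y) by v_\<sigma>(y) gives a supersolution of G[A,\<sigma>];
  conversely, the pointwise minimum of v_\<sigma> and the value of G[A,\<sigma>] restricted to G is a
  supersolution of G. Minimality yields both inequalities.
\<close>

section \<open>Substochastic games\<close>

definition rand_mean :: "('v, 'b) ssg_scheme \<Rightarrow> 'v \<Rightarrow> ('v \<Rightarrow> real) \<Rightarrow> real" where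
  "rand_mean G x Z = (\<Sum>y\<in>verts G. (if (x, y) \<in> arcs G then prob G x y else 0) * Z y)"

text \<open>
  The new sinks of G[A,\<sigma>] carry values v_\<sigma>(y) that are not known to be rational, so G[A,\<sigma>]
  need not satisfy \<^const>\<open>ssg\<close>. The argument only needs the following weaker conditions,
  which are preserved by \<^const>\<open>transform\<close>.
\<close>
definition substochastic_game :: "('v, 'b) ssg_scheme \<Rightarrow> bool" where
  "substochastic_game G \<longleftrightarrow> finite (verts G) \<and> arcs G \<subseteq> verts G \<times> verts G \<and>
     (\<forall>x\<in>verts G. kind G x \<noteq> Sink \<longrightarrow> (\<exists>y. (x, y) \<in> arcs G)) \<and>
     (\<forall>x\<in>verts G. kind G x = Rand \<longrightarrow>
        (\<forall>y. (x, y) \<in> arcs G \<longrightarrow> 0 \<le> prob G x y) \<and> rand_mean G x (\<lambda>_. 1) \<le> 1) \<and>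
     (\<forall>s\<in>sinks G. 0 \<le> val G s)"

lemma substochastic_gameD:
  assumes "substochastic_game G"
  shows "finite (verts G)" "arcs G \<subseteq> verts G \<times> verts G"
    "\<And>x. x \<in> verts G \<Longrightarrow> kind G x \<noteq> Sink \<Longrightarrow> \<exists>y. (x, y) \<in> arcs G"
    "\<And>x y. x \<in> verts G \<Longrightarrow> kind G x = Rand \<Longrightarrow> (x, y) \<in> arcs G \<Longrightarrow> 0 \<le> prob G x y"
    "\<And>x. x \<in> verts G \<Longrightarrow> kind G x = Rand \<Longrightarrow> rand_mean G x (\<lambda>_. 1) \<le> 1"
    "\<And>s. s \<in> sinks G \<Longrightarrow> 0 \<le> val G s"
  using assms unfolding substochastic_game_def by blast+

lemma ssg_imp_substochastic_game:
  assumes "ssg G"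
  shows "substochastic_game G"
proof -
  have V: "arcs G \<subseteq> verts G \<times> verts G" "finite (verts G)"
    using assms by (auto simp: ssg_def)
  have "rand_mean G x (\<lambda>_. 1) = (\<Sum>y\<in>{y. (x, y) \<in> arcs G}. prob G x y)" for x
  proof -
    have "{y. (x, y) \<in> arcs G} = {y\<in>verts G. (x, y) \<in> arcs G}" using V by auto
    then show ?thesis using V(2) by (simp add: rand_mean_def sum.inter_filter)
  qed
  then show ?thesis
    using assms unfolding ssg_def substochastic_game_def by (auto intro: less_imp_le)
qed

lemma sinks_subset_verts: "sinks G \<subseteq> verts G"
  by (auto simp: sinks_def)

lemma sum_mult_indicator:
  "finite S \<Longrightarrow> (\<Sum>z\<in>S. (f z::real) * (if a = z then 1 else 0)) = (if a \<in> S then f a else 0)"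
  by (simp add: sum.delta if_distrib[of "\<lambda>t. _ * t"] cong: if_cong)

lemma sum_indicator_mult:
  "finite S \<Longrightarrow> (\<Sum>z\<in>S. (if z = a then 1 else 0) * (f z::real)) = (if a \<in> S then f a else 0)"
  by (simp add: sum.delta if_distrib[of "\<lambda>t. t * _"] cong: if_cong)

lemma rand_mean_mono:
  assumes "substochastic_game G" "x \<in> verts G" "kind G x = Rand"
    and "\<And>y. (x, y) \<in> arcs G \<Longrightarrow> Z y \<le> Z' y"
  shows "rand_mean G x Z \<le> rand_mean G x Z'"
  unfolding rand_mean_def
  using assms(4) substochastic_gameD(4)[OF assms(1-3)] by (intro sum_mono) (auto intro: mult_left_mono)

section \<open>The Markov chain of a pair of strategies\<close>

lemma trans_nonneg:
  assumes "substochastic_game G" "x \<in> verts G"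
  shows "0 \<le> trans G \<sigma> \<tau> x z"
  using substochastic_gameD(4)[OF assms] by (cases "kind G x") (auto simp: trans_def)

lemma trans_row_sum_le_1:
  assumes "substochastic_game G" "x \<in> verts G"
  shows "(\<Sum>z\<in>verts G. trans G \<sigma> \<tau> x z) \<le> 1"
proof (cases "kind G x")
  case Rand
  then show ?thesis
    using substochastic_gameD(5)[OF assms] by (simp add: trans_def rand_mean_def)
qed (auto simp: trans_def sum.delta substochastic_gameD(1)[OF assms(1)])

lemma sum_trans_mult:
  assumes "substochastic_game G" "max_strategy G \<sigma>" "min_strategy G \<tau>" "x \<in> verts G"
  shows "(\<Sum>z\<in>verts G. trans G \<sigma> \<tau> x z * f z) =
    (case kind G x of Max \<Rightarrow> f (\<sigma> x) | Min \<Rightarrow> f (\<tau> x) | Rand \<Rightarrow> rand_mean G x f | Sink \<Rightarrow> f x)"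
proof -
  have "kind G x = Max \<Longrightarrow> \<sigma> x \<in> verts G" "kind G x = Min \<Longrightarrow> \<tau> x \<in> verts G"
    using assms substochastic_gameD(2)[OF assms(1)] by (auto simp: max_strategy_def min_strategy_def)
  then show ?thesis
    using assms(4) substochastic_gameD(1)[OF assms(1)]
    by (cases "kind G x") (simp_all add: trans_def rand_mean_def sum_indicator_mult)
qed

lemma nstep_nonneg:
  assumes "substochastic_game G" "x \<in> verts G"
  shows "0 \<le> nstep G \<sigma> \<tau> n x y"
  using assms(2)
proof (induction n arbitrary: x)
  case (Suc n)
  then show ?case
    by (auto intro!: sum_nonneg mult_nonneg_nonneg trans_nonneg[OF assms(1)])
qed simp

lemma nstep_from_sink:
  assumes "substochastic_game G" "s \<in> sinks G"
  shows "nstep G \<sigma> \<tau> n s y = (if y = s then 1 else 0)"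
proof (induction n)
  case (Suc n)
  have "s \<in> verts G" using assms(2) by (simp add: sinks_def)
  moreover have "nstep G \<sigma> \<tau> (Suc n) s y = (\<Sum>z\<in>verts G. (if z = s then 1 else 0) * nstep G \<sigma> \<tau> n z y)"
    using assms(2) by (simp add: trans_def sinks_def)
  ultimately show ?case
    using Suc substochastic_gameD(1)[OF assms(1)] by (simp add: sum_indicator_mult)
qed simp

lemma nstep_to_sink_mono:
  assumes "substochastic_game G" "s \<in> sinks G" "x \<in> verts G"
  shows "nstep G \<sigma> \<tau> n x s \<le> nstep G \<sigma> \<tau> (Suc n) x s"
  using assms(3)
proof (induction n arbitrary: x)
  case 0
  have "nstep G \<sigma> \<tau> (Suc 0) x s = trans G \<sigma> \<tau> x s"
    using assms(2) substochastic_gameD(1)[OF assms(1)] by (simp add: sum_mult_indicator sinks_def)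
  moreover have "x = s \<Longrightarrow> trans G \<sigma> \<tau> x s = 1"
    using assms(2) by (simp add: trans_def sinks_def)
  ultimately show ?case using trans_nonneg[OF assms(1) 0] by auto
next
  case (Suc n)
  then show ?case
    by (simp only: nstep.simps) (intro sum_mono mult_left_mono trans_nonneg[OF assms(1)]; simp)
qed

definition superharmonic :: "('v, 'b) ssg_scheme \<Rightarrow> ('v \<Rightarrow> 'v) \<Rightarrow> ('v \<Rightarrow> 'v) \<Rightarrow> ('v \<Rightarrow> real) \<Rightarrow> bool" where
  "superharmonic G \<sigma> \<tau> U \<longleftrightarrow> (\<forall>x\<in>verts G. (\<Sum>z\<in>verts G. trans G \<sigma> \<tau> x z * U z) \<le> U x)"

lemma nstep_superharmonic:
  assumes "substochastic_game G" "superharmonic G \<sigma> \<tau> U" "x \<in> verts G"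
  shows "(\<Sum>y\<in>verts G. nstep G \<sigma> \<tau> n x y * U y) \<le> U x"
  using assms(3)
proof (induction n arbitrary: x)
  case 0
  then show ?case using substochastic_gameD(1)[OF assms(1)] by (simp add: sum_indicator_mult)
next
  case (Suc n)
  have "(\<Sum>y\<in>verts G. nstep G \<sigma> \<tau> (Suc n) x y * U y)
      = (\<Sum>z\<in>verts G. trans G \<sigma> \<tau> x z * (\<Sum>y\<in>verts G. nstep G \<sigma> \<tau> n z y * U y))"
    by (simp add: sum_distrib_right sum_distrib_left mult.assoc) (rule sum.swap)
  also have "\<dots> \<le> (\<Sum>z\<in>verts G. trans G \<sigma> \<tau> x z * U z)"
    by (intro sum_mono mult_left_mono Suc.IH trans_nonneg[OF assms(1) Suc.prems])
  also have "\<dots> \<le> U x" using assms(2) Suc.prems by (simp add: superharmonic_def)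
  finally show ?case .
qed

definition horizon_value :: "('v, 'b) ssg_scheme \<Rightarrow> ('v \<Rightarrow> 'v) \<Rightarrow> ('v \<Rightarrow> 'v) \<Rightarrow> 'v \<Rightarrow> nat \<Rightarrow> real" where
  "horizon_value G \<sigma> \<tau> x n = (\<Sum>s\<in>sinks G. val G s * nstep G \<sigma> \<tau> n x s)"

lemma horizon_value_le_superharmonic:
  assumes "substochastic_game G" "x \<in> verts G" "superharmonic G \<sigma> \<tau> U"
    and "\<forall>y\<in>verts G. 0 \<le> U y" "\<forall>s\<in>sinks G. val G s \<le> U s"
  shows "horizon_value G \<sigma> \<tau> x n \<le> U x"
proof -
  have "horizon_value G \<sigma> \<tau> x n \<le> (\<Sum>s\<in>sinks G. nstep G \<sigma> \<tau> n x s * U s)"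
    unfolding horizon_value_def using assms(5) nstep_nonneg[OF assms(1,2)]
    by (intro sum_mono) (simp add: mult.commute mult_right_mono)
  also have "\<dots> \<le> (\<Sum>y\<in>verts G. nstep G \<sigma> \<tau> n x y * U y)"
    using assms(4) nstep_nonneg[OF assms(1,2)] substochastic_gameD(1)[OF assms(1)]
    by (intro sum_mono2) (auto simp: sinks_def)
  also have "\<dots> \<le> U x" by (rule nstep_superharmonic[OF assms(1,3,2)])
  finally show ?thesis .
qed

text \<open>The constant \<open>\<Sum>\<^sub>s val s\<close> is superharmonic, so the increasing sequence is bounded.\<close>
lemma horizon_value_tendsto:
  assumes "substochastic_game G" "x \<in> verts G"
  shows "horizon_value G \<sigma> \<tau> x \<longlonglongrightarrow> play_value G \<sigma> \<tau> x"
proof -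
  define C where "C = (\<Sum>s\<in>sinks G. val G s)"
  have fin: "finite (sinks G)"
    using finite_subset[OF sinks_subset_verts substochastic_gameD(1)[OF assms(1)]] .
  have C: "0 \<le> C" "\<forall>s\<in>sinks G. val G s \<le> C"
    unfolding C_def using substochastic_gameD(6)[OF assms(1)] fin
    by (auto intro: sum_nonneg member_le_sum)
  have "superharmonic G \<sigma> \<tau> (\<lambda>_. C)"
    unfolding superharmonic_def sum_distrib_right[symmetric]
    using trans_row_sum_le_1[OF assms(1)]
    by (intro ballI mult_left_le_one_le C(1) sum_nonneg trans_nonneg[OF assms(1)])
  then have bounded: "horizon_value G \<sigma> \<tau> x n \<le> C" for n
    using horizon_value_le_superharmonic[OF assms] C by auto
  have "incseq (horizon_value G \<sigma> \<tau> x)"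
    unfolding incseq_Suc_iff horizon_value_def
    using nstep_to_sink_mono[OF assms(1) _ assms(2)] substochastic_gameD(6)[OF assms(1)]
    by (auto intro!: sum_mono mult_left_mono)
  with bounded obtain L where "horizon_value G \<sigma> \<tau> x \<longlonglongrightarrow> L"
    using incseq_convergent by blast
  moreover have "play_value G \<sigma> \<tau> x = lim (horizon_value G \<sigma> \<tau> x)"
    unfolding play_value_def horizon_value_def by (simp add: fun_eq_iff)
  ultimately show ?thesis using limI by metis
qed

lemma play_value_nonneg:
  assumes "substochastic_game G" "x \<in> verts G"
  shows "0 \<le> play_value G \<sigma> \<tau> x"
proof (rule LIMSEQ_le_const[OF horizon_value_tendsto[OF assms]], intro exI allI impI)
  fix n
  show "0 \<le> horizon_value G \<sigma> \<tau> x n"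
    unfolding horizon_value_def
    using substochastic_gameD(6)[OF assms(1)] nstep_nonneg[OF assms] by (auto intro!: sum_nonneg)
qed

lemma play_value_le_superharmonic:
  assumes "substochastic_game G" "x \<in> verts G" "superharmonic G \<sigma> \<tau> U"
    and "\<forall>y\<in>verts G. 0 \<le> U y" "\<forall>s\<in>sinks G. val G s \<le> U s"
  shows "play_value G \<sigma> \<tau> x \<le> U x"
  using horizon_value_le_superharmonic[OF assms]
  by (intro LIMSEQ_le_const2[OF horizon_value_tendsto[OF assms(1,2)]]) auto

lemma play_value_step:
  assumes "substochastic_game G" "x \<in> verts G"
  shows "play_value G \<sigma> \<tau> x = (\<Sum>z\<in>verts G. trans G \<sigma> \<tau> x z * play_value G \<sigma> \<tau> z)"
proof -
  have step: "horizon_value G \<sigma> \<tau> x (Suc n) = (\<Sum>z\<in>verts G. trans G \<sigma> \<tau> x z * horizon_value G \<sigma> \<tau> z n)" for n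
    unfolding horizon_value_def
    by (simp add: sum_distrib_left mult.left_commute) (rule sum.swap)
  have "(\<lambda>n. horizon_value G \<sigma> \<tau> x (Suc n)) \<longlonglongrightarrow> play_value G \<sigma> \<tau> x"
    using LIMSEQ_Suc[OF horizon_value_tendsto[OF assms]] .
  moreover have "(\<lambda>n. horizon_value G \<sigma> \<tau> x (Suc n)) \<longlonglongrightarrow> (\<Sum>z\<in>verts G. trans G \<sigma> \<tau> x z * play_value G \<sigma> \<tau> z)"
    unfolding step by (intro tendsto_intros horizon_value_tendsto[OF assms(1)])
  ultimately show ?thesis using LIMSEQ_unique by blast
qed

lemma play_value_sink:
  assumes "substochastic_game G" "s \<in> sinks G"
  shows "play_value G \<sigma> \<tau> s = val G s"
proof -
  have "finite (sinks G)"
    using finite_subset[OF sinks_subset_verts substochastic_gameD(1)[OF assms(1)]] .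
  then have "horizon_value G \<sigma> \<tau> s = (\<lambda>n. val G s)"
    unfolding horizon_value_def nstep_from_sink[OF assms] using assms(2)
    by (simp add: fun_eq_iff if_distrib[of "\<lambda>t. _ * t"] sum.delta cong: if_cong)
  then show ?thesis
    using horizon_value_tendsto[OF assms(1), of s \<sigma> \<tau>] assms(2) LIMSEQ_unique[OF _ tendsto_const]
    by (simp add: sinks_def)
qed

lemma play_value_unfold:
  assumes "substochastic_game G" "max_strategy G \<sigma>" "min_strategy G \<tau>" "x \<in> verts G"
  shows "play_value G \<sigma> \<tau> x = (case kind G x of
      Max \<Rightarrow> play_value G \<sigma> \<tau> (\<sigma> x)
    | Min \<Rightarrow> play_value G \<sigma> \<tau> (\<tau> x)
    | Rand \<Rightarrow> rand_mean G x (play_value G \<sigma> \<tau>)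
    | Sink \<Rightarrow> play_value G \<sigma> \<tau> x)"
  using play_value_step[OF assms(1,4)] sum_trans_mult[OF assms] by simp

section \<open>The value of a MAX strategy as the least supersolution\<close>

definition inf_value :: "('v, 'b) ssg_scheme \<Rightarrow> ('v \<Rightarrow> 'v) \<Rightarrow> 'v \<Rightarrow> real" where
  "inf_value G \<sigma> x = Inf ((\<lambda>\<tau>. play_value G \<sigma> \<tau> x) ` {\<tau>. min_strategy G \<tau>})"

definition supersolution :: "('v, 'b) ssg_scheme \<Rightarrow> ('v \<Rightarrow> 'v) \<Rightarrow> ('v \<Rightarrow> real) \<Rightarrow> bool" where
  "supersolution G \<sigma> Z \<longleftrightarrow> (\<forall>y\<in>verts G. 0 \<le> Z y) \<and> (\<forall>s\<in>sinks G. val G s \<le> Z s) \<and>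
     (\<forall>x\<in>verts G. (kind G x = Max \<longrightarrow> Z (\<sigma> x) \<le> Z x) \<and>
        (kind G x = Min \<longrightarrow> (\<exists>y. (x, y) \<in> arcs G \<and> Z y \<le> Z x)) \<and>
        (kind G x = Rand \<longrightarrow> rand_mean G x Z \<le> Z x))"

lemma supersolutionI:
  assumes "\<And>y. y \<in> verts G \<Longrightarrow> 0 \<le> Z y"
    and "\<And>s. s \<in> sinks G \<Longrightarrow> val G s \<le> Z s"
    and "\<And>x. x \<in> verts G \<Longrightarrow> kind G x = Max \<Longrightarrow> Z (\<sigma> x) \<le> Z x"
    and "\<And>x. x \<in> verts G \<Longrightarrow> kind G x = Min \<Longrightarrow> \<exists>y. (x, y) \<in> arcs G \<and> Z y \<le> Z x"
    and "\<And>x. x \<in> verts G \<Longrightarrow> kind G x = Rand \<Longrightarrow> rand_mean G x Z \<le> Z x"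
  shows "supersolution G \<sigma> Z"
  using assms unfolding supersolution_def by blast

lemma supersolutionD:
  assumes "supersolution G \<sigma> Z"
  shows "\<And>y. y \<in> verts G \<Longrightarrow> 0 \<le> Z y"
    and "\<And>s. s \<in> sinks G \<Longrightarrow> val G s \<le> Z s"
    and "\<And>x. x \<in> verts G \<Longrightarrow> kind G x = Max \<Longrightarrow> Z (\<sigma> x) \<le> Z x"
    and "\<And>x. x \<in> verts G \<Longrightarrow> kind G x = Min \<Longrightarrow> \<exists>y. (x, y) \<in> arcs G \<and> Z y \<le> Z x"
    and "\<And>x. x \<in> verts G \<Longrightarrow> kind G x = Rand \<Longrightarrow> rand_mean G x Z \<le> Z x"
  using assms unfolding supersolution_def by blast+

lemma ex_min_strategy:
  assumes "substochastic_game G"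
  shows "\<exists>\<tau>. min_strategy G \<tau>"
proof -
  have "min_strategy G (\<lambda>x. SOME y. (x, y) \<in> arcs G)"
    unfolding min_strategy_def
    using substochastic_gameD(3)[OF assms] by (auto intro: someI_ex)
  then show ?thesis by blast
qed

lemma inf_value_le_play_value:
  assumes "substochastic_game G" "min_strategy G \<tau>" "x \<in> verts G"
  shows "inf_value G \<sigma> x \<le> play_value G \<sigma> \<tau> x"
  unfolding inf_value_def
  using assms play_value_nonneg[OF assms(1,3)] by (intro cInf_lower bdd_belowI[of _ 0]) auto

lemma inf_value_greatest:
  assumes "substochastic_game G" "\<And>\<tau>. min_strategy G \<tau> \<Longrightarrow> c \<le> play_value G \<sigma> \<tau> x"
  shows "c \<le> inf_value G \<sigma> x"
  unfolding inf_value_def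
  using ex_min_strategy[OF assms(1)] assms(2) by (intro cInf_greatest) auto

lemma supersolution_superharmonic_response:
  assumes "substochastic_game G" "max_strategy G \<sigma>" "supersolution G \<sigma> Z"
  obtains \<tau> where "min_strategy G \<tau>" "superharmonic G \<sigma> \<tau> Z"
proof
  define \<tau> where "\<tau> = (\<lambda>x. SOME y. (x, y) \<in> arcs G \<and> Z y \<le> Z x)"
  have \<tau>: "(x, \<tau> x) \<in> arcs G \<and> Z (\<tau> x) \<le> Z x" if "x \<in> verts G" "kind G x = Min" for x
    unfolding \<tau>_def using supersolutionD(4)[OF assms(3) that] by (rule someI_ex)
  then show "min_strategy G \<tau>" by (simp add: min_strategy_def)
  then show "superharmonic G \<sigma> \<tau> Z"
    unfolding superharmonic_def using \<tau> supersolutionD[OF assms(3)]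
    by (auto simp: sum_trans_mult[OF assms(1,2)] split: kind.split)
qed

lemma inf_value_le_supersolution:
  assumes "substochastic_game G" "max_strategy G \<sigma>" "supersolution G \<sigma> Z" "x \<in> verts G"
  shows "inf_value G \<sigma> x \<le> Z x"
proof -
  obtain \<tau> where \<tau>: "min_strategy G \<tau>" "superharmonic G \<sigma> \<tau> Z"
    using supersolution_superharmonic_response[OF assms(1-3)] .
  have "inf_value G \<sigma> x \<le> play_value G \<sigma> \<tau> x"
    by (rule inf_value_le_play_value[OF assms(1) \<tau>(1) assms(4)])
  also have "\<dots> \<le> Z x"
    using supersolutionD(1,2)[OF assms(3)] by (intro play_value_le_superharmonic[OF assms(1,4) \<tau>(2)]) auto
  finally show ?thesis .
qed

lemma inf_value_sink:
  assumes "substochastic_game G" "s \<in> sinks G"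
  shows "inf_value G \<sigma> s = val G s"
proof (rule order_antisym)
  obtain \<tau> where "min_strategy G \<tau>" using ex_min_strategy[OF assms(1)] by blast
  then show "inf_value G \<sigma> s \<le> val G s"
    using inf_value_le_play_value[OF assms(1)] play_value_sink[OF assms] assms(2)
    by (metis sinks_subset_verts subsetD)
  show "val G s \<le> inf_value G \<sigma> s"
    using play_value_sink[OF assms] by (intro inf_value_greatest[OF assms(1)]) simp
qed

lemma inf_value_supersolution:
  assumes "substochastic_game G" "max_strategy G \<sigma>"
  shows "supersolution G \<sigma> (inf_value G \<sigma>)"
proof (rule supersolutionI)
  note unfold = play_value_unfold[OF assms]
  note le_play_value = inf_value_le_play_value[OF assms(1)]
  show "0 \<le> inf_value G \<sigma> x" if "x \<in> verts G" for x
    using play_value_nonneg[OF assms(1) that] by (intro inf_value_greatest[OF assms(1)])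
  show "val G s \<le> inf_value G \<sigma> s" if "s \<in> sinks G" for s
    using inf_value_sink[OF assms(1) that] by simp
  fix x assume x: "x \<in> verts G"
  show "inf_value G \<sigma> (\<sigma> x) \<le> inf_value G \<sigma> x" if Max: "kind G x = Max"
  proof -
    have "\<sigma> x \<in> verts G"
      using assms x Max substochastic_gameD(2)[OF assms(1)] by (auto simp: max_strategy_def)
    then show ?thesis
      using le_play_value unfold[OF _ x] Max by (intro inf_value_greatest[OF assms(1)]) simp
  qed
  show "rand_mean G x (inf_value G \<sigma>) \<le> inf_value G \<sigma> x" if Rand: "kind G x = Rand"
  proof (rule inf_value_greatest[OF assms(1)])
    fix \<tau> assume \<tau>: "min_strategy G \<tau>"
    have "rand_mean G x (inf_value G \<sigma>) \<le> rand_mean G x (play_value G \<sigma> \<tau>)"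
      using le_play_value[OF \<tau>] substochastic_gameD(2)[OF assms(1)]
      by (intro rand_mean_mono[OF assms(1) x Rand]) auto
    also have "\<dots> = play_value G \<sigma> \<tau> x" using unfold[OF \<tau> x] Rand by simp
    finally show "rand_mean G x (inf_value G \<sigma>) \<le> play_value G \<sigma> \<tau> x" .
  qed
  show "\<exists>y. (x, y) \<in> arcs G \<and> inf_value G \<sigma> y \<le> inf_value G \<sigma> x" if Min: "kind G x = Min"
  proof -
    define S where "S = {y. (x, y) \<in> arcs G}"
    have S: "S \<subseteq> verts G" "finite S" "S \<noteq> {}"
      using substochastic_gameD(1-3)[OF assms(1)] x Min
      by (auto simp: S_def intro: finite_subset)
    obtain y0 where y0: "y0 \<in> S" "\<And>y. y \<in> S \<Longrightarrow> inf_value G \<sigma> y0 \<le> inf_value G \<sigma> y"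
      using arg_min_if_finite[OF S(2,3), of "inf_value G \<sigma>"] by (meson not_le)
    have "inf_value G \<sigma> y0 \<le> inf_value G \<sigma> x"
    proof (rule inf_value_greatest[OF assms(1)])
      fix \<tau> assume \<tau>: "min_strategy G \<tau>"
      then have "\<tau> x \<in> S" using x Min by (auto simp: min_strategy_def S_def)
      then have "inf_value G \<sigma> y0 \<le> play_value G \<sigma> \<tau> (\<tau> x)"
        using y0(2) le_play_value[OF \<tau>] S(1) by (meson order_trans subsetD)
      also have "\<dots> = play_value G \<sigma> \<tau> x" using unfold[OF \<tau> x] Min by simp
      finally show "inf_value G \<sigma> y0 \<le> play_value G \<sigma> \<tau> x" .
    qed
    then show ?thesis using y0(1) by (auto simp: S_def)
  qed
qed

lemma value_max_eq_inf_value: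
  assumes "substochastic_game G" "max_strategy G \<sigma>" "x \<in> verts G"
  shows "value_max G \<sigma> x = inf_value G \<sigma> x"
proof -
  obtain \<tau> where \<tau>: "min_strategy G \<tau>" "superharmonic G \<sigma> \<tau> (inf_value G \<sigma>)"
    using supersolution_superharmonic_response[OF assms(1,2) inf_value_supersolution[OF assms(1,2)]] .
  have le_inf_value: "play_value G \<sigma> \<tau> y \<le> inf_value G \<sigma> y" if "y \<in> verts G" for y
    using supersolutionD(1,2)[OF inf_value_supersolution[OF assms(1,2)]]
    by (intro play_value_le_superharmonic[OF assms(1) that \<tau>(2)]) auto
  then have "best_response G \<sigma> \<tau>"
    unfolding best_response_def using \<tau>(1) inf_value_le_play_value[OF assms(1)] by (meson order_trans)
  then have best: "best_response G \<sigma> (SOME \<tau>. best_response G \<sigma> \<tau>)"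
    by (rule someI[where P = "best_response G \<sigma>"])
  show ?thesis
    unfolding value_max_def
  proof (rule order_antisym)
    show "play_value G \<sigma> (SOME \<tau>. best_response G \<sigma> \<tau>) x \<le> inf_value G \<sigma> x"
      using best \<tau>(1) assms(3) le_inf_value unfolding best_response_def by (meson order_trans)
    show "inf_value G \<sigma> x \<le> play_value G \<sigma> (SOME \<tau>. best_response G \<sigma> \<tau>) x"
      using best assms(3) unfolding best_response_def by (intro inf_value_le_play_value[OF assms(1)]) auto
  qed
qed

section \<open>The transformed game\<close>

definition redirect :: "('v \<times> 'v) set \<Rightarrow> 'v \<Rightarrow> 'v \<Rightarrow> 'v + ('v \<times> 'v)" where
  "redirect A x y = (if (x, y) \<in> A then Inr (x, y) else Inl y)"

lemma verts_transform: "verts (transform G A f) = Inl ` verts G \<union> Inr ` A"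
  by (simp add: transform_def)

lemma Inl_in_verts_transform [simp]: "Inl x \<in> verts (transform G A f) \<longleftrightarrow> x \<in> verts G"
  by (auto simp: verts_transform)

lemma kind_transform [simp]:
  "kind (transform G A f) (Inl x) = kind G x" "kind (transform G A f) (Inr e) = Sink"
  by (simp_all add: transform_def)

lemma arcs_transform [simp]:
  "(Inl x, Inl y) \<in> arcs (transform G A f) \<longleftrightarrow> (x, y) \<in> arcs G \<and> (x, y) \<notin> A"
  "(Inl x, Inr e) \<in> arcs (transform G A f) \<longleftrightarrow> e \<in> A \<and> fst e = x"
  "(Inr e, w) \<in> arcs (transform G A f) \<longleftrightarrow> e \<in> A \<and> w = Inr e"
  by (cases e; auto simp: transform_def)+

lemma prob_transform [simp]:
  "prob (transform G A f) (Inl x) (Inl y) = prob G x y"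
  "prob (transform G A f) (Inl x) (Inr e) = (if fst e = x then prob G x (snd e) else 0)"
  by (cases e; simp add: transform_def)+

lemma val_transform [simp]:
  "val (transform G A f) (Inl x) = val G x" "val (transform G A f) (Inr e) = f e"
  by (simp_all add: transform_def)

lemma sinks_transform: "sinks (transform G A f) = Inl ` sinks G \<union> Inr ` A"
  by (auto simp: sinks_def transform_def)

lemma verts_transform_cases:
  assumes "w \<in> verts (transform G A f)"
  obtains (Inl) x where "w = Inl x" "x \<in> verts G" | (Inr) e where "w = Inr e" "e \<in> A"
  using assms by (auto simp: verts_transform)

lemma lift_strat_Inl: "lift_strat A \<sigma> (Inl x) = redirect A x (\<sigma> x)"
  by (simp add: lift_strat_def redirect_def)

lemma arc_redirect_transform_iff:
  assumes "A \<subseteq> arcs G"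
  shows "(Inl x, redirect A x y) \<in> arcs (transform G A f) \<longleftrightarrow> (x, y) \<in> arcs G"
  using assms by (auto simp: redirect_def)

lemma arc_transformE:
  assumes "(Inl x, w) \<in> arcs (transform G A f)" "A \<subseteq> arcs G"
  obtains y where "(x, y) \<in> arcs G" "w = redirect A x y"
  using assms by (cases w) (auto simp: redirect_def)

lemma rand_mean_transform:
  assumes "finite (verts G)" "arcs G \<subseteq> verts G \<times> verts G" "A \<subseteq> arcs G"
  shows "rand_mean (transform G A f) (Inl x) Z = rand_mean G x (\<lambda>y. Z (redirect A x y))"
proof -
  let ?G' = "transform G A f"
  let ?p = "\<lambda>w. if (Inl x, w) \<in> arcs ?G' then prob ?G' (Inl x) w else 0"
  have A: "A \<subseteq> verts G \<times> verts G" "finite A"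
    using assms finite_subset[of A "verts G \<times> verts G"] by auto
  have "(\<Sum>e\<in>A. ?p (Inr e) * Z (Inr e)) = (\<Sum>e\<in>{e\<in>A. fst e = x}. prob G x (snd e) * Z (Inr e))"
    using A(2) by (simp add: sum.inter_filter if_distrib[of "\<lambda>t. t * _"] cong: if_cong)
  also have "\<dots> = (\<Sum>y\<in>{y\<in>verts G. (x, y) \<in> A}. prob G x y * Z (Inr (x, y)))"
    by (rule sum.reindex_bij_witness[where i = "\<lambda>y. (x, y)" and j = snd]) (use A in auto)
  also have "\<dots> = (\<Sum>y\<in>verts G. if (x, y) \<in> A then prob G x y * Z (Inr (x, y)) else 0)"
    using assms(1) by (simp add: sum.inter_filter)
  finally have new_sinks: "(\<Sum>e\<in>A. ?p (Inr e) * Z (Inr e)) = \<dots>" .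
  have "rand_mean ?G' (Inl x) Z = (\<Sum>y\<in>verts G. ?p (Inl y) * Z (Inl y)) + (\<Sum>e\<in>A. ?p (Inr e) * Z (Inr e))"
    unfolding rand_mean_def verts_transform using assms(1) A(2)
    by (subst sum.union_disjoint) (auto simp: sum.reindex)
  also have "\<dots> = rand_mean G x (\<lambda>y. Z (redirect A x y))"
    unfolding new_sinks rand_mean_def sum.distrib[symmetric] using assms(3)
    by (intro sum.cong refl) (auto simp: redirect_def)
  finally show ?thesis .
qed

lemma substochastic_game_transform:
  assumes "substochastic_game G" "A \<subseteq> arcs G" "\<forall>e\<in>A. 0 \<le> f e"
  shows "substochastic_game (transform G A f)"
proof -
  let ?G' = "transform G A f"
  note G = substochastic_gameD[OF assms(1)]
  have A: "A \<subseteq> verts G \<times> verts G" "finite A"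
    using assms(2) G(1,2) finite_subset[of A "verts G \<times> verts G"] by auto
  have "finite (verts ?G')" using G(1) A(2) by (simp add: verts_transform)
  moreover have "arcs ?G' \<subseteq> verts ?G' \<times> verts ?G'"
    using G(2) A(1) by (auto simp: transform_def)
  moreover have "\<exists>v. (w, v) \<in> arcs ?G'" if "w \<in> verts ?G'" "kind ?G' w \<noteq> Sink" for w
    using that G(3) arc_redirect_transform_iff[OF assms(2)]
    by (cases rule: verts_transform_cases) (auto, blast)
  moreover have "0 \<le> prob ?G' w v" if "w \<in> verts ?G'" "kind ?G' w = Rand" "(w, v) \<in> arcs ?G'" for w v
    using that by (cases rule: verts_transform_cases)
      (auto elim!: arc_transformE[OF _ assms(2)] simp: redirect_def G(4))
  moreover have "rand_mean ?G' w (\<lambda>_. 1) \<le> 1" if "w \<in> verts ?G'" "kind ?G' w = Rand" for w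
    using that by (cases rule: verts_transform_cases)
      (auto simp: rand_mean_transform[OF G(1,2) assms(2)] G(5))
  moreover have "0 \<le> val ?G' s" if "s \<in> sinks ?G'" for s
    using that G(6) assms(3) by (auto simp: sinks_transform)
  ultimately show ?thesis unfolding substochastic_game_def by blast
qed

lemma max_strategy_lift_strat:
  assumes "max_strategy G \<sigma>" "A \<subseteq> arcs G"
  shows "max_strategy (transform G A f) (lift_strat A \<sigma>)"
  unfolding max_strategy_def
proof (intro ballI impI)
  fix w assume "w \<in> verts (transform G A f)" "kind (transform G A f) w = Max"
  then show "(w, lift_strat A \<sigma> w) \<in> arcs (transform G A f)"
    using assms arc_redirect_transform_iff[OF assms(2)]
    by (cases rule: verts_transform_cases) (auto simp: lift_strat_Inl max_strategy_def)
qed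

lemma supersolution_transform_extend:
  assumes "substochastic_game G" "A \<subseteq> arcs G" "supersolution G \<sigma> u"
    and "\<forall>(a, b)\<in>A. f (a, b) \<le> u b"
  shows "supersolution (transform G A f) (lift_strat A \<sigma>) (case_sum u (\<lambda>e. u (snd e)))"
    (is "supersolution ?G' _ ?U")
proof (rule supersolutionI)
  note G = substochastic_gameD[OF assms(1)]
  note u = supersolutionD[OF assms(3)]
  have U_redirect: "?U (redirect A a b) = u b" for a b
    by (simp add: redirect_def)
  show "0 \<le> ?U w" if "w \<in> verts ?G'" for w
    using that assms(2) G(2) u(1) by (cases rule: verts_transform_cases) auto
  show "val ?G' s \<le> ?U s" if "s \<in> sinks ?G'" for s
    using that u(2) assms(4) by (auto simp: sinks_transform)
  fix w assume "w \<in> verts ?G'"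
  then consider x where "w = Inl x" "x \<in> verts G" | e where "w = Inr e"
    by (cases rule: verts_transform_cases) auto
  note w = this
  show "?U (lift_strat A \<sigma> w) \<le> ?U w" if "kind ?G' w = Max"
    using that u(3) by (cases rule: w) (auto simp: lift_strat_Inl U_redirect)
  show "\<exists>v. (w, v) \<in> arcs ?G' \<and> ?U v \<le> ?U w" if Min: "kind ?G' w = Min"
  proof (cases rule: w)
    case (1 x)
    then obtain y where "(x, y) \<in> arcs G" "u y \<le> u x" using Min u(4) by auto
    then show ?thesis
      using 1 arc_redirect_transform_iff[OF assms(2)] U_redirect by (intro exI[of _ "redirect A x y"]) simp
  qed (use Min in simp)
  show "rand_mean ?G' w ?U \<le> ?U w" if "kind ?G' w = Rand"
    using that u(5) by (cases rule: w) (auto simp: rand_mean_transform[OF G(1,2) assms(2)] U_redirect)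
qed

lemma supersolution_restrict_min:
  assumes "substochastic_game G" "A \<subseteq> arcs G" "max_strategy G \<sigma>" "supersolution G \<sigma> u"
    and "supersolution (transform G A f) (lift_strat A \<sigma>) u'"
    and "\<forall>(a, b)\<in>A. u b \<le> u' (Inr (a, b))"
  shows "supersolution G \<sigma> (\<lambda>y. min (u y) (u' (Inl y)))" (is "supersolution G \<sigma> ?Z")
proof (rule supersolutionI)
  note G = substochastic_gameD[OF assms(1)]
  note u = supersolutionD[OF assms(4)]
  note u' = supersolutionD[OF assms(5), simplified]
  have Z_redirect: "?Z b \<le> u' (redirect A a b)" for a b
    using assms(6) by (auto simp: redirect_def)
  show "0 \<le> ?Z y" if "y \<in> verts G" for y
    using that u(1) u'(1) by simp
  show "val G s \<le> ?Z s" if "s \<in> sinks G" for s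
    using that u(2) u'(2)[of "Inl s"] by (simp add: sinks_transform)
  fix y assume y: "y \<in> verts G"
  show "?Z (\<sigma> y) \<le> ?Z y" if Max: "kind G y = Max"
  proof -
    have "?Z (\<sigma> y) \<le> u' (lift_strat A \<sigma> (Inl y))" unfolding lift_strat_Inl by (rule Z_redirect)
    also have "\<dots> \<le> u' (Inl y)" using u'(3) y Max by simp
    finally show ?thesis using u(3)[OF y Max] by simp
  qed
  show "\<exists>z. (y, z) \<in> arcs G \<and> ?Z z \<le> ?Z y" if Min: "kind G y = Min"
  proof (cases "u y \<le> u' (Inl y)")
    case True
    obtain z where "(y, z) \<in> arcs G" "u z \<le> u y" using u(4)[OF y Min] by blast
    then show ?thesis using True by (intro exI[of _ z]) simp
  next
    case False
    obtain w where w: "(Inl y, w) \<in> arcs (transform G A f)" "u' w \<le> u' (Inl y)"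
      using u'(4)[of "Inl y"] y Min by auto
    then obtain z where "(y, z) \<in> arcs G" "w = redirect A y z"
      using arc_transformE[OF _ assms(2)] by metis
    then show ?thesis using False w(2) Z_redirect[of z y] by (intro exI[of _ z]) simp
  qed
  show "rand_mean G y ?Z \<le> ?Z y" if Rand: "kind G y = Rand"
  proof -
    have "rand_mean G y ?Z \<le> rand_mean G y u"
      by (rule rand_mean_mono[OF assms(1) y Rand]) simp
    also have "\<dots> \<le> u y" using u(5)[OF y Rand] .
    finally have "rand_mean G y ?Z \<le> u y" .
    moreover have "rand_mean G y ?Z \<le> rand_mean G y (\<lambda>z. u' (redirect A y z))"
      using Z_redirect by (intro rand_mean_mono[OF assms(1) y Rand])
    moreover have "\<dots> \<le> u' (Inl y)"
      using u'(5)[of "Inl y"] y Rand by (simp add: rand_mean_transform[OF G(1,2) assms(2)])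
    ultimately show ?thesis by simp
  qed
qed

lemma value_max_transform:
  assumes "substochastic_game G" "A \<subseteq> arcs G" "max_strategy G \<sigma>"
    and f: "\<forall>(a, b)\<in>A. f (a, b) = inf_value G \<sigma> b" and x: "x \<in> verts G"
  shows "value_max (transform G A f) (lift_strat A \<sigma>) (Inl x) = inf_value G \<sigma> x"
proof -
  let ?G' = "transform G A f" and ?\<sigma>' = "lift_strat A \<sigma>"
  let ?u = "inf_value G \<sigma>" and ?u' = "inf_value ?G' ?\<sigma>'"
  have u: "supersolution G \<sigma> ?u" by (rule inf_value_supersolution[OF assms(1,3)])
  have "\<forall>e\<in>A. 0 \<le> f e"
    using f supersolutionD(1)[OF u] assms(2) substochastic_gameD(2)[OF assms(1)] by fastforce
  then have G': "substochastic_game ?G'"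
    by (rule substochastic_game_transform[OF assms(1,2)])
  have \<sigma>': "max_strategy ?G' ?\<sigma>'" by (rule max_strategy_lift_strat[OF assms(3,2)])
  have U: "supersolution ?G' ?\<sigma>' (case_sum ?u (\<lambda>e. ?u (snd e)))"
    using f by (intro supersolution_transform_extend[OF assms(1-2) u]) auto
  have "?u' (Inl x) \<le> ?u x"
    using inf_value_le_supersolution[OF G' \<sigma>' U, of "Inl x"] x by simp
  moreover have "?u' (Inr (a, b)) = ?u b" if "(a, b) \<in> A" for a b
    using that f inf_value_sink[OF G'] by (auto simp: sinks_transform)
  then have "?u x \<le> min (?u x) (?u' (Inl x))"
    by (intro inf_value_le_supersolution[OF assms(1,3) _ x] supersolution_restrict_min[OF assms(1-3) u,
          where f = f] inf_value_supersolution[OF G' \<sigma>']) auto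
  ultimately have "?u' (Inl x) = ?u x" by simp
  then show ?thesis using value_max_eq_inf_value[OF G' \<sigma>'] x by simp
qed

theorem lemma12:
  fixes G :: "'v ssg" and A :: "('v \<times> 'v) set" and \<sigma> :: "'v \<Rightarrow> 'v"
  assumes "ssg G"
    and "A \<subseteq> arcs G"
    and "\<forall>(x, y)\<in>A. kind G x \<noteq> Sink"
    and "max_strategy G \<sigma>"
    and "x \<in> verts G"
  shows "value_max G \<sigma> x = value_max (transform_strat G A \<sigma>) (lift_strat A \<sigma>) (Inl x)"
proof -
  have G: "substochastic_game G" by (rule ssg_imp_substochastic_game[OF assms(1)])
  have "\<forall>(a, b)\<in>A. value_max G \<sigma> b = inf_value G \<sigma> b"
    using assms(2) substochastic_gameD(2)[OF G] value_max_eq_inf_value[OF G assms(4)] by auto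
  then have "value_max (transform_strat G A \<sigma>) (lift_strat A \<sigma>) (Inl x) = inf_value G \<sigma> x"
    unfolding transform_strat_def by (intro value_max_transform[OF G assms(2,4) _ assms(5)]) auto
  with value_max_eq_inf_value[OF G assms(4,5)] show ?thesis by simp
qed

end
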